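(* Let $(x,y,s)\in\mathcal{N}(\theta)$ with $\theta\in\left(0,\ \min\left\{\frac{1}{3\sqrt n},\ \frac{1}{4\|QVV^T\|_F+1}\right\}\right)$, and let $\mu=x^Ts/n$, $\omega=\max_i\{x_i,s_i\}$ and $M=[\,SV+XQV\ \ -XA^T\,]$. Then the condition number of $M$ satisfies $$\kappa_M=\mathcal{O}\left(\frac{\omega^2+\mu\,\sigma_{\max}(Q)}{\mu}\,\kappa_{VAQ}\right),$$ where $\kappa_{VAQ}$ is the condition number of the matrix $\begin{bmatrix}V^T&0\\0&A\end{bmatrix}\begin{bmatrix}I&-Q\\0&I\end{bmatrix}$.
   Context: Given $b\in\mathbb{R}^m$, $c\in\mathbb{R}^n$, $A\in\mathbb{R}^{m\times n}$ with $\mathrm{rank}(A)=m\le n$ and symmetric positive semidefinite $Q\in\mathbb{R}^{n\times n}$ (data of the LCQO problem $\min c^Tx+\frac12x^TQx$ s.t. $Ax=b$, $x\ge0$, with dual constraints $A^Ty+s-Qx=c$, $s\ge0$). Partition $A=[A_B\ \ A_N]$ with $A_B$ a nonsingular $m\times m$ basis and set $V=\begin{bmatrix}A_B^{-1}A_N\\-I\end{bmatrix}\in\mathbb{R}^{n\times(n-m)}$, so $AV=0$. $X=\mathrm{diag}(x)$, $S=\mathrm{diag}(s)$, $e$ is the all-ones vector. $\mathcal{PD}^0=\{(x,y,s): Ax=b,\ A^Ty+s-Qx=c,\ x>0,\ s>0\}$ and $\mathcal{N}(\theta)=\{(x,y,s)\in\mathcal{PD}^0:\|XSe-\mu e\|_2\le\theta\mu\}$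 with $\mu=x^Ts/n$. Condition number means ratio of largest to smallest singular value; $\sigma_{\max}(Q)$ is the largest singular value of $Q$. The $\mathcal{O}$ hides an absolute constant. *)

theory Defs
  imports "Jordan_Normal_Form.Matrix" "Jordan_Normal_Form.Char_Poly" "Jordan_Normal_Form.DL_Rank"
begin

definition diag_vec :: "real vec \<Rightarrow> real mat" where
  "diag_vec v = mat (dim_vec v) (dim_vec v) (\<lambda>(i,j). if i = j then v $ i else 0)"

definition mat_inv :: "real mat \<Rightarrow> real mat" where
  "mat_inv B = (SOME C. C \<in> carrier_mat (dim_row B) (dim_row B) \<and> C * B = 1\<^sub>m (dim_row B)
                          \<and> B * C = 1\<^sub>m (dim_row B))"

definition basis_part :: "real mat \<Rightarrow> real mat" where
  "basis_part A = mat (dim_row A) (dim_row A) (\<lambda>(i,j). A $$ (i,j))"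

definition nonbasis_part :: "real mat \<Rightarrow> real mat" where
  "nonbasis_part A = mat (dim_row A) (dim_col A - dim_row A) (\<lambda>(i,j). A $$ (i, dim_row A + j))"

(* V = [A_B^{-1} A_N ; -I]  (n x (n-m)) *)
definition null_basis :: "real mat \<Rightarrow> real mat" where
  "null_basis A = (let m = dim_row A; n = dim_col A in
     four_block_mat (mat_inv (basis_part A) * nonbasis_part A) (0\<^sub>m m 0)
                    (- 1\<^sub>m (n - m)) (0\<^sub>m (n - m) 0))"

(* Singular values: square roots of the eigenvalues of B^T B (if B is tall or square)
   resp. of B B^T (if B is wide); i.e. the min(p,q) singular values of a p x q matrix. *)
definition gram_mat :: "real mat \<Rightarrow> real mat" where
  "gram_mat B = (if dim_col B \<le> dim_row B then transpose_mat B * B else B * transpose_mat B)"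

definition singular_values :: "real mat \<Rightarrow> real set" where
  "singular_values B = {sqrt k | k. eigenvalue (gram_mat B) k}"

definition sigma_max :: "real mat \<Rightarrow> real" where
  "sigma_max B = Max (singular_values B)"

definition sigma_min :: "real mat \<Rightarrow> real" where
  "sigma_min B = Min (singular_values B)"

definition cond_num :: "real mat \<Rightarrow> real" where
  "cond_num B = sigma_max B / sigma_min B"

definition frob_norm :: "real mat \<Rightarrow> real" where
  "frob_norm B = sqrt (\<Sum>i<dim_row B. \<Sum>j<dim_col B. (B $$ (i,j))^2)"

definition vnorm2 :: "real vec \<Rightarrow> real" where
  "vnorm2 v = sqrt (\<Sum>i<dim_vec v. (v $ i)^2)"

definition psd :: "real mat \<Rightarrow> bool" where
  "psd Q \<longleftrightarrow> Q \<in> carrier_mat (dim_row Q) (dim_row Q) \<and> transpose_mat Q = Q \<and>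
     (\<forall>v \<in> carrier_vec (dim_row Q). v \<bullet> (Q *\<^sub>v v) \<ge> 0)"

definition neighbourhood ::
  "real mat \<Rightarrow> real vec \<Rightarrow> real vec \<Rightarrow> real mat \<Rightarrow> real \<Rightarrow> real vec \<Rightarrow> real vec \<Rightarrow> real vec \<Rightarrow> bool" where
  "neighbourhood A b c Q \<theta> x y s \<longleftrightarrow>
     (let n = dim_col A; \<mu> = (x \<bullet> s) / real n in
      x \<in> carrier_vec n \<and> s \<in> carrier_vec n \<and> y \<in> carrier_vec (dim_row A) \<and>
      A *\<^sub>v x = b \<and> transpose_mat A *\<^sub>v y + s - Q *\<^sub>v x = c \<and>
      (\<forall>i<n. x $ i > 0) \<and> (\<forall>i<n. s $ i > 0) \<and>
      vnorm2 (vec n (\<lambda>i. x $ i * s $ i - \<mu>)) \<le> \<theta> * \<mu>)"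

end

theory Submission
  imports Defs "HOL-Analysis.Function_Topology"
begin

(*
  Write W = VAQ^T. For z = (u, v) one has W z = (p, t) with p = V u and t = A^T v - Q p, while
  (M z)_i = s_i p_i - x_i t_i. Since A p = 0 and Q is positive semidefinite, p^T t <= 0; together
  with beta <= x_i s_i and x_i, s_i <= omega, where beta = (1 - theta) mu, this gives
    beta^2 / omega^2 |W z|^2 <= |M z|^2 <= 2 omega^2 |W z|^2.
  The extreme singular values of a matrix C are the extreme values of |C z| / |z| (the
  variational characterisation is obtained by maximising a quadratic form over the compact unit
  sphere), hence
    kappa_M <= sqrt 2 omega^2 / beta * kappa_VAQ <= 3 (omega^2 + mu sigma_max(Q)) / mu * kappa_VAQ
  because theta < 1/3. The hidden constant is 3.
*)

lemma scalar_prod_self_nonneg: "0 \<le> (v :: real vec) \<bullet> v"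
  using conjugate_square_ge_0_vec[of v] by (simp add: conjugate_vec_def)

lemma scalar_prod_self_pos:
  "(v :: real vec) \<in> carrier_vec n \<Longrightarrow> v \<noteq> 0\<^sub>v n \<Longrightarrow> 0 < v \<bullet> v"
  using conjugate_square_greater_0_vec[of v n] by (simp add: conjugate_vec_def)

lemma scalar_prod_self_eq_sum:
  "(v :: real vec) \<in> carrier_vec n \<Longrightarrow> v \<bullet> v = (\<Sum>i<n. (v $ i)^2)"
  unfolding scalar_prod_def by (auto simp: lessThan_atLeast0 power2_eq_square)

lemma quadratic_form_eq_sum:
  fixes G :: "real mat"
  assumes "G \<in> carrier_mat n n" and "w \<in> carrier_vec n"
  shows "w \<bullet> (G *\<^sub>v w) = (\<Sum>i<n. \<Sum>j<n. w $ i * G $$ (i,j) * w $ j)"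
  using assms by (auto simp: scalar_prod_def lessThan_atLeast0 sum_distrib_left mult.assoc intro!: sum.cong)

lemma linear_plus_quadratic_nonpos_imp_zero:
  fixes a b :: real
  assumes "\<And>t. t * b + t^2 * a \<le> 0"
  shows "b = 0"
proof (rule ccontr)
  assume "b \<noteq> 0"
  define c where "c = \<bar>a\<bar> + 1"
  have c: "0 < c" by (simp add: c_def add_nonneg_pos)
  define t where "t = b / (2 * c)"
  have tc: "t * c = b / 2" using c by (simp add: t_def)
  have "t^2 * \<bar>a\<bar> \<le> t^2 * c" by (simp add: c_def mult_left_mono)
  also have "\<dots> = t * b / 2" by (simp add: power2_eq_square mult.assoc tc)
  finally have "t^2 * \<bar>a\<bar> \<le> t * b / 2" .
  moreover have "0 < t * b"
    using \<open>b \<noteq> 0\<close> c by (auto simp: t_def zero_less_mult_iff zero_less_divide_iff linorder_neq_iff)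
  moreover have "- (t^2 * \<bar>a\<bar>) \<le> t^2 * a" using mult_left_mono[of "- \<bar>a\<bar>" a "t^2"] by simp
  ultimately have "0 < t * b + t^2 * a" by linarith
  with assms[of t] show False by simp
qed

section \<open>Extreme eigenvalues of symmetric matrices\<close>

lemma quadratic_form_add_smult:
  fixes G :: "real mat"
  assumes G: "G \<in> carrier_mat n n" and sym: "transpose_mat G = G"
    and f: "f \<in> carrier_vec n" and u: "u \<in> carrier_vec n"
  shows "(f + t \<cdot>\<^sub>v u) \<bullet> (G *\<^sub>v (f + t \<cdot>\<^sub>v u))
    = f \<bullet> (G *\<^sub>v f) + 2 * t * (u \<bullet> (G *\<^sub>v f)) + t^2 * (u \<bullet> (G *\<^sub>v u))"
proof -
  have Gf: "G *\<^sub>v f \<in> carrier_vec n" and Gu: "G *\<^sub>v u \<in> carrier_vec n" using G f u by auto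
  have swap: "f \<bullet> (G *\<^sub>v u) = u \<bullet> (G *\<^sub>v f)"
    using transpose_vec_mult_scalar[OF G u f] comm_scalar_prod[OF Gf u] sym by simp
  have "G *\<^sub>v (f + t \<cdot>\<^sub>v u) = G *\<^sub>v f + t \<cdot>\<^sub>v (G *\<^sub>v u)"
    using G f u by (simp add: mult_add_distrib_mat_vec[of G n n] mult_mat_vec[of G n n])
  then show ?thesis
    using f u Gf Gu swap
    by (simp add: add_scalar_prod_distrib[of _ n] scalar_prod_add_distrib[of _ n] power2_eq_square)
qed

lemma rayleigh_max_imp_eigenvector:
  fixes G :: "real mat"
  assumes G: "G \<in> carrier_mat n n" and sym: "transpose_mat G = G"
    and bound: "\<And>w. w \<in> carrier_vec n \<Longrightarrow> w \<bullet> (G *\<^sub>v w) \<le> lam * (w \<bullet> w)"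
    and f: "f \<in> carrier_vec n" and attained: "f \<bullet> (G *\<^sub>v f) = lam * (f \<bullet> f)"
  shows "G *\<^sub>v f = lam \<cdot>\<^sub>v f"
proof -
  define u where "u = G *\<^sub>v f - lam \<cdot>\<^sub>v f"
  have u: "u \<in> carrier_vec n" and Gf: "G *\<^sub>v f \<in> carrier_vec n" using G f by (auto simp: u_def)
  have "u \<bullet> u = u \<bullet> (G *\<^sub>v f - lam \<cdot>\<^sub>v f)" by (simp only: u_def)
  also have "\<dots> = u \<bullet> (G *\<^sub>v f) - lam * (u \<bullet> f)"
    using scalar_prod_minus_distrib[of u n "G *\<^sub>v f" "lam \<cdot>\<^sub>v f"] u f Gf by simp
  finally have uGf: "u \<bullet> (G *\<^sub>v f) = u \<bullet> u + lam * (u \<bullet> f)" by simp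
  have "t * (2 * (u \<bullet> u)) + t^2 * (u \<bullet> (G *\<^sub>v u) - lam * (u \<bullet> u)) \<le> 0" for t
  proof -
    have one: "1\<^sub>m n \<in> carrier_mat n n" "transpose_mat (1\<^sub>m n) = (1\<^sub>m n :: real mat)" by auto
    have "(f + t \<cdot>\<^sub>v u) \<bullet> (G *\<^sub>v (f + t \<cdot>\<^sub>v u)) \<le> lam * ((f + t \<cdot>\<^sub>v u) \<bullet> (1\<^sub>m n *\<^sub>v (f + t \<cdot>\<^sub>v u)))"
      using bound[of "f + t \<cdot>\<^sub>v u"] f u by simp
    then have "f \<bullet> (G *\<^sub>v f) + 2 * t * (u \<bullet> (G *\<^sub>v f)) + t^2 * (u \<bullet> (G *\<^sub>v u))
        \<le> lam * (f \<bullet> f + 2 * t * (u \<bullet> f) + t^2 * (u \<bullet> u))"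
      unfolding quadratic_form_add_smult[OF G sym f u] quadratic_form_add_smult[OF one f u]
      using f u by simp
    then show ?thesis unfolding attained uGf by (simp add: algebra_simps)
  qed
  then have "2 * (u \<bullet> u) = 0" by (rule linear_plus_quadratic_nonpos_imp_zero)
  then have "u = 0\<^sub>v n" using scalar_prod_self_pos[OF u] by fastforce
  show ?thesis
  proof (rule eq_vecI)
    fix i assume "i < dim_vec (lam \<cdot>\<^sub>v f)"
    then have "i < n" using f by simp
    then have "u $ i = 0" using \<open>u = 0\<^sub>v n\<close> by simp
    then show "(G *\<^sub>v f) $ i = (lam \<cdot>\<^sub>v f) $ i" using \<open>i < n\<close> Gf f by (simp add: u_def)
  qed (use G f in simp)
qed

lemma PiE_lessThan_UNIV:
  "PiE {..<n} S = PiE UNIV (\<lambda>i. if i < n then S i else {undefined})"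
  by (auto simp: PiE_iff extensional_def split: if_splits)

lemma compact_unit_sphere_fun:
  fixes n :: nat
  shows "compact (PiE {..<n} (\<lambda>_. {-1..1::real}) \<inter> {h. (\<Sum>i<n. (h i)^2) = 1})"
proof -
  have "compact (PiE {..<n} (\<lambda>_. {-1..1::real}))"
    unfolding PiE_lessThan_UNIV compactin_euclidean_iff[symmetric] euclidean_product_topology[symmetric]
    by (subst compactin_PiE) auto
  moreover have "continuous_on UNIV (\<lambda>h :: nat \<Rightarrow> real. \<Sum>i<n. (h i)^2)"
    by (intro continuous_intros continuous_on_product_coordinates)
  then have "closed {h :: nat \<Rightarrow> real. (\<Sum>i<n. (h i)^2) = 1}"
    by (rule closed_Collect_eq) auto
  ultimately show ?thesis by (rule compact_Int_closed)
qed

lemma quadratic_form_max_on_unit_sphere: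
  fixes G :: "real mat"
  assumes G: "G \<in> carrier_mat n n" and n: "0 < n"
  obtains f where "f \<in> carrier_vec n" "f \<bullet> f = 1"
    "\<And>w. w \<in> carrier_vec n \<Longrightarrow> w \<bullet> w = 1 \<Longrightarrow> w \<bullet> (G *\<^sub>v w) \<le> f \<bullet> (G *\<^sub>v f)"
proof -
  define K where "K = PiE {..<n} (\<lambda>_. {-1..1::real}) \<inter> {h. (\<Sum>i<n. (h i)^2) = 1}"
  have "compact K" unfolding K_def by (rule compact_unit_sphere_fun)
  define q where "q h = vec n h \<bullet> (G *\<^sub>v vec n h)" for h
  have q_sum: "q h = (\<Sum>i<n. \<Sum>j<n. h i * G $$ (i,j) * h j)" for h
    unfolding q_def by (subst quadratic_form_eq_sum[OF G]) auto
  have to_K: "restrict (\<lambda>i. w $ i) {..<n} \<in> K \<and> vec n (restrict (\<lambda>i. w $ i) {..<n}) = w"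
    if w: "w \<in> carrier_vec n" "w \<bullet> w = 1" for w
  proof -
    have sq: "(\<Sum>i<n. (w $ i)^2) = 1" using w by (simp add: scalar_prod_self_eq_sum)
    have "\<bar>w $ i\<bar> \<le> 1" if "i < n" for i
    proof -
      have "(w $ i)^2 \<le> (\<Sum>j<n. (w $ j)^2)"
        using that by (intro member_le_sum) auto
      then show ?thesis using sq by (simp add: abs_square_le_1)
    qed
    then show ?thesis using w sq by (auto simp: K_def abs_le_iff)
  qed
  have "K \<noteq> {}"
    using to_K[of "unit_vec n 0"] n by auto
  moreover have "continuous_on K q"
  proof -
    have "continuous_on K (\<lambda>h. h i)" for i
      by (rule continuous_on_subset[OF continuous_on_product_coordinates]) simp
    then show ?thesis
      unfolding q_sum by (intro continuous_on_sum continuous_on_mult continuous_on_const)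
  qed
  ultimately obtain h where h: "h \<in> K" and hmax: "\<And>k. k \<in> K \<Longrightarrow> q k \<le> q h"
    using continuous_attains_sup[OF \<open>compact K\<close>] by blast
  show ?thesis
  proof
    show "vec n h \<in> carrier_vec n" by simp
    show "vec n h \<bullet> vec n h = 1" using h by (simp add: K_def scalar_prod_self_eq_sum)
    show "w \<bullet> (G *\<^sub>v w) \<le> vec n h \<bullet> (G *\<^sub>v vec n h)" if "w \<in> carrier_vec n" "w \<bullet> w = 1" for w
      using hmax[of "restrict (\<lambda>i. w $ i) {..<n}"] to_K[OF that] by (simp add: q_def)
  qed
qed

lemma sym_mat_max_eigenvalue:
  fixes G :: "real mat"
  assumes G: "G \<in> carrier_mat n n" and sym: "transpose_mat G = G" and n: "0 < n"
  obtains lam where "eigenvalue G lam" "\<And>w. w \<in> carrier_vec n \<Longrightarrow> w \<bullet> (G *\<^sub>v w) \<le> lam * (w \<bullet> w)"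
proof -
  obtain f where f: "f \<in> carrier_vec n" "f \<bullet> f = 1"
    and fmax: "\<And>w. w \<in> carrier_vec n \<Longrightarrow> w \<bullet> w = 1 \<Longrightarrow> w \<bullet> (G *\<^sub>v w) \<le> f \<bullet> (G *\<^sub>v f)"
    using quadratic_form_max_on_unit_sphere[OF G n] by blast
  define lam where "lam = f \<bullet> (G *\<^sub>v f)"
  have bound: "w \<bullet> (G *\<^sub>v w) \<le> lam * (w \<bullet> w)" if w: "w \<in> carrier_vec n" for w
  proof (cases "w = 0\<^sub>v n")
    case True
    then show ?thesis using G by simp
  next
    case False
    define c where "c = 1 / sqrt (w \<bullet> w)"
    have ww: "0 < w \<bullet> w" using scalar_prod_self_pos[OF w False] .
    have Gw: "G *\<^sub>v w \<in> carrier_vec n" using G w by simp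
    have scale: "(c \<cdot>\<^sub>v w) \<bullet> (G *\<^sub>v (c \<cdot>\<^sub>v w)) = c^2 * (w \<bullet> (G *\<^sub>v w))"
      using w Gw by (simp add: mult_mat_vec[OF G w] power2_eq_square)
    have "(c \<cdot>\<^sub>v w) \<bullet> (c \<cdot>\<^sub>v w) = 1"
      using w ww by (simp add: c_def power2_eq_square[symmetric])
    then have "c^2 * (w \<bullet> (G *\<^sub>v w)) \<le> lam"
      using fmax[of "c \<cdot>\<^sub>v w"] w scale by (simp add: lam_def)
    moreover have "c^2 = 1 / (w \<bullet> w)" using ww by (simp add: c_def power_divide)
    ultimately show ?thesis using ww by (simp add: field_simps)
  qed
  have "G *\<^sub>v f = lam \<cdot>\<^sub>v f"
    using rayleigh_max_imp_eigenvector[OF G sym bound f(1)] f(2) by (simp add: lam_def)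
  moreover have "f \<noteq> 0\<^sub>v n" using f by auto
  ultimately have "eigenvalue G lam"
    using f G by (auto simp: eigenvalue_def eigenvector_def)
  then show ?thesis using bound that by blast
qed

lemma sym_mat_min_eigenvalue:
  fixes G :: "real mat"
  assumes G: "G \<in> carrier_mat n n" and sym: "transpose_mat G = G" and n: "0 < n"
  obtains lam where "eigenvalue G lam" "\<And>w. w \<in> carrier_vec n \<Longrightarrow> lam * (w \<bullet> w) \<le> w \<bullet> (G *\<^sub>v w)"
proof -
  have neg: "- G \<in> carrier_mat n n" "transpose_mat (- G) = - G"
    using G sym by (auto simp: transpose_uminus)
  obtain lam where ev: "eigenvalue (- G) lam"
    and bound: "\<And>w. w \<in> carrier_vec n \<Longrightarrow> w \<bullet> (- G *\<^sub>v w) \<le> lam * (w \<bullet> w)"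
    using sym_mat_max_eigenvalue[OF neg n] by blast
  from ev obtain v where v: "v \<in> carrier_vec n" "v \<noteq> 0\<^sub>v n" "- G *\<^sub>v v = lam \<cdot>\<^sub>v v"
    using G by (auto simp: eigenvalue_def eigenvector_def)
  have "G *\<^sub>v v = (- lam) \<cdot>\<^sub>v v"
  proof -
    have "- (G *\<^sub>v v) = lam \<cdot>\<^sub>v v" using v G by simp
    then have "G *\<^sub>v v = - (lam \<cdot>\<^sub>v v)" by (metis uminus_uminus_vec)
    then show ?thesis by (auto intro: eq_vecI)
  qed
  then have "eigenvalue G (- lam)" using v G by (auto simp: eigenvalue_def eigenvector_def)
  moreover have "- lam * (w \<bullet> w) \<le> w \<bullet> (G *\<^sub>v w)" if w: "w \<in> carrier_vec n" for w
    using bound[OF w] G w by (simp add: scalar_prod_uminus_right)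
  ultimately show ?thesis using that by blast
qed

lemma eigenvalue_le_if_rayleigh_upper:
  fixes G :: "real mat"
  assumes G: "G \<in> carrier_mat n n" and k: "eigenvalue G k"
    and bound: "\<And>w. w \<in> carrier_vec n \<Longrightarrow> w \<bullet> (G *\<^sub>v w) \<le> c * (w \<bullet> w)"
  shows "k \<le> c"
proof -
  obtain v where v: "v \<in> carrier_vec n" "v \<noteq> 0\<^sub>v n" "G *\<^sub>v v = k \<cdot>\<^sub>v v"
    using k G by (auto simp: eigenvalue_def eigenvector_def)
  then have "k * (v \<bullet> v) \<le> c * (v \<bullet> v)" using bound[OF v(1)] by simp
  then show ?thesis using scalar_prod_self_pos[OF v(1,2)] by simp
qed

lemma eigenvalue_ge_if_rayleigh_lower:
  fixes G :: "real mat"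
  assumes G: "G \<in> carrier_mat n n" and k: "eigenvalue G k"
    and bound: "\<And>w. w \<in> carrier_vec n \<Longrightarrow> c * (w \<bullet> w) \<le> w \<bullet> (G *\<^sub>v w)"
  shows "c \<le> k"
proof -
  obtain v where v: "v \<in> carrier_vec n" "v \<noteq> 0\<^sub>v n" "G *\<^sub>v v = k \<cdot>\<^sub>v v"
    using k G by (auto simp: eigenvalue_def eigenvector_def)
  then have "c * (v \<bullet> v) \<le> k * (v \<bullet> v)" using bound[OF v(1)] by simp
  then show ?thesis using scalar_prod_self_pos[OF v(1,2)] by simp
qed

section \<open>Singular values and condition numbers\<close>

lemma gram_quadratic_form:
  fixes C :: "real mat"
  assumes C: "C \<in> carrier_mat a r" and z: "z \<in> carrier_vec r"
  shows "z \<bullet> ((transpose_mat C * C) *\<^sub>v z) = (C *\<^sub>v z) \<bullet> (C *\<^sub>v z)"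
proof -
  have "z \<bullet> ((transpose_mat C * C) *\<^sub>v z) = (transpose_mat C *\<^sub>v (C *\<^sub>v z)) \<bullet> z"
    using C z by (simp add: comm_scalar_prod[of _ r])
  also have "\<dots> = (C *\<^sub>v z) \<bullet> (C *\<^sub>v z)"
    using transpose_vec_mult_scalar[OF C z, of "C *\<^sub>v z"] C z by simp
  finally show ?thesis .
qed

lemma gram_eigenvalue_attained:
  fixes C :: "real mat"
  assumes C: "C \<in> carrier_mat a r" and k: "eigenvalue (transpose_mat C * C) k"
  obtains z where "z \<in> carrier_vec r" "z \<noteq> 0\<^sub>v r" "(C *\<^sub>v z) \<bullet> (C *\<^sub>v z) = k * (z \<bullet> z)"
proof -
  obtain z where z: "z \<in> carrier_vec r" "z \<noteq> 0\<^sub>v r" "(transpose_mat C * C) *\<^sub>v z = k \<cdot>\<^sub>v z"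
    using k C by (auto simp: eigenvalue_def eigenvector_def)
  then have "(C *\<^sub>v z) \<bullet> (C *\<^sub>v z) = k * (z \<bullet> z)"
    using gram_quadratic_form[OF C z(1)] by simp
  with z that show ?thesis by blast
qed

lemma gram_eigenvalue_nonneg:
  fixes C :: "real mat"
  assumes C: "C \<in> carrier_mat a r" and k: "eigenvalue (transpose_mat C * C) k"
  shows "0 \<le> k"
proof -
  obtain z where z: "z \<in> carrier_vec r" "z \<noteq> 0\<^sub>v r" "(C *\<^sub>v z) \<bullet> (C *\<^sub>v z) = k * (z \<bullet> z)"
    using gram_eigenvalue_attained[OF C k] .
  have "0 \<le> k * (z \<bullet> z)" using z(3) scalar_prod_self_nonneg by metis
  then show ?thesis using scalar_prod_self_pos[OF z(1,2)] by (simp add: zero_le_mult_iff)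
qed

lemma finite_eigenvalues:
  fixes G :: "real mat"
  assumes G: "G \<in> carrier_mat n n"
  shows "finite {k. eigenvalue G k}"
proof -
  have "char_poly G \<noteq> 0" using degree_monic_char_poly[OF G] by auto
  then have "finite {k. poly (char_poly G) k = 0}" by (rule poly_roots_finite)
  then show ?thesis using eigenvalue_root_char_poly[OF G] by simp
qed

lemma gram_extreme_eigenvalues:
  fixes C :: "real mat"
  assumes C: "C \<in> carrier_mat a r" and r: "0 < r"
  defines "E \<equiv> {k. eigenvalue (transpose_mat C * C) k}"
  shows "finite E" "E \<noteq> {}" "Max E \<in> E" "Min E \<in> E"
    "\<And>z. z \<in> carrier_vec r \<Longrightarrow> (C *\<^sub>v z) \<bullet> (C *\<^sub>v z) \<le> Max E * (z \<bullet> z)"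
    "\<And>z. z \<in> carrier_vec r \<Longrightarrow> Min E * (z \<bullet> z) \<le> (C *\<^sub>v z) \<bullet> (C *\<^sub>v z)"
proof -
  let ?G = "transpose_mat C * C"
  have G: "?G \<in> carrier_mat r r" using C by simp
  have sym: "transpose_mat ?G = ?G" using transpose_mult[of "transpose_mat C" r a C r] C by simp
  show fin: "finite E" unfolding E_def by (rule finite_eigenvalues[OF G])
  obtain lmax where lmax: "eigenvalue ?G lmax"
    and upper: "\<And>z. z \<in> carrier_vec r \<Longrightarrow> z \<bullet> (?G *\<^sub>v z) \<le> lmax * (z \<bullet> z)"
    using sym_mat_max_eigenvalue[OF G sym r] by blast
  obtain lmin where lmin: "eigenvalue ?G lmin"
    and lower: "\<And>z. z \<in> carrier_vec r \<Longrightarrow> lmin * (z \<bullet> z) \<le> z \<bullet> (?G *\<^sub>v z)"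
    using sym_mat_min_eigenvalue[OF G sym r] by blast
  show "E \<noteq> {}" using lmax by (auto simp: E_def)
  have max: "Max E = lmax"
    using fin lmax eigenvalue_le_if_rayleigh_upper[OF G _ upper] by (intro Max_eqI) (auto simp: E_def)
  have min: "Min E = lmin"
    using fin lmin eigenvalue_ge_if_rayleigh_lower[OF G _ lower] by (intro Min_eqI) (auto simp: E_def)
  show "Max E \<in> E" "Min E \<in> E" using max min lmax lmin by (auto simp: E_def)
  show "(C *\<^sub>v z) \<bullet> (C *\<^sub>v z) \<le> Max E * (z \<bullet> z)" if "z \<in> carrier_vec r" for z
    using upper[OF that] gram_quadratic_form[OF C that] max by simp
  show "Min E * (z \<bullet> z) \<le> (C *\<^sub>v z) \<bullet> (C *\<^sub>v z)" if "z \<in> carrier_vec r" for z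
    using lower[OF that] gram_quadratic_form[OF C that] min by simp
qed

lemma singular_values_gram:
  assumes "gram_mat B = transpose_mat C * C"
  shows "singular_values B = sqrt ` {k. eigenvalue (transpose_mat C * C) k}"
  using assms unfolding singular_values_def by auto

lemma sigma_max_gram:
  fixes B C :: "real mat"
  assumes C: "C \<in> carrier_mat a r" and r: "0 < r" and gram: "gram_mat B = transpose_mat C * C"
  shows "0 \<le> sigma_max B"
    "\<And>z. z \<in> carrier_vec r \<Longrightarrow> (C *\<^sub>v z) \<bullet> (C *\<^sub>v z) \<le> (sigma_max B)^2 * (z \<bullet> z)"
    "\<exists>z \<in> carrier_vec r. z \<noteq> 0\<^sub>v r \<and> (C *\<^sub>v z) \<bullet> (C *\<^sub>v z) = (sigma_max B)^2 * (z \<bullet> z)"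
proof -
  define E where "E = {k. eigenvalue (transpose_mat C * C) k}"
  note ext = gram_extreme_eigenvalues[OF C r, folded E_def]
  have nonneg: "0 \<le> Max E" using ext(3) gram_eigenvalue_nonneg[OF C] by (auto simp: E_def)
  have "sigma_max B = sqrt (Max E)"
    unfolding sigma_max_def singular_values_gram[OF gram] E_def[symmetric]
    by (rule mono_Max_commute[symmetric]) (auto simp: mono_def ext(1,2))
  then have sq: "(sigma_max B)^2 = Max E" "0 \<le> sigma_max B" using nonneg by auto
  show "0 \<le> sigma_max B" by (fact sq(2))
  show "(C *\<^sub>v z) \<bullet> (C *\<^sub>v z) \<le> (sigma_max B)^2 * (z \<bullet> z)" if "z \<in> carrier_vec r" for z
    using ext(5)[OF that] sq(1) by simp
  show "\<exists>z \<in> carrier_vec r. z \<noteq> 0\<^sub>v r \<and> (C *\<^sub>v z) \<bullet> (C *\<^sub>v z) = (sigma_max B)^2 * (z \<bullet> z)"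
    using gram_eigenvalue_attained[OF C] ext(3) sq(1) by (metis E_def mem_Collect_eq)
qed

lemma sigma_min_gram:
  fixes B C :: "real mat"
  assumes C: "C \<in> carrier_mat a r" and r: "0 < r" and gram: "gram_mat B = transpose_mat C * C"
  shows "0 \<le> sigma_min B"
    "\<And>z. z \<in> carrier_vec r \<Longrightarrow> (sigma_min B)^2 * (z \<bullet> z) \<le> (C *\<^sub>v z) \<bullet> (C *\<^sub>v z)"
    "\<exists>z \<in> carrier_vec r. z \<noteq> 0\<^sub>v r \<and> (C *\<^sub>v z) \<bullet> (C *\<^sub>v z) = (sigma_min B)^2 * (z \<bullet> z)"
proof -
  define E where "E = {k. eigenvalue (transpose_mat C * C) k}"
  note ext = gram_extreme_eigenvalues[OF C r, folded E_def]
  have nonneg: "0 \<le> Min E" using ext(4) gram_eigenvalue_nonneg[OF C] by (auto simp: E_def)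
  have "sigma_min B = sqrt (Min E)"
    unfolding sigma_min_def singular_values_gram[OF gram] E_def[symmetric]
    by (rule mono_Min_commute[symmetric]) (auto simp: mono_def ext(1,2))
  then have sq: "(sigma_min B)^2 = Min E" "0 \<le> sigma_min B" using nonneg by auto
  show "0 \<le> sigma_min B" by (fact sq(2))
  show "(sigma_min B)^2 * (z \<bullet> z) \<le> (C *\<^sub>v z) \<bullet> (C *\<^sub>v z)" if "z \<in> carrier_vec r" for z
    using ext(6)[OF that] sq(1) by simp
  show "\<exists>z \<in> carrier_vec r. z \<noteq> 0\<^sub>v r \<and> (C *\<^sub>v z) \<bullet> (C *\<^sub>v z) = (sigma_min B)^2 * (z \<bullet> z)"
    using gram_eigenvalue_attained[OF C] ext(4) sq(1) by (metis E_def mem_Collect_eq)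
qed

lemma singular_value_comparison:
  fixes B B' C D :: "real mat"
  assumes C: "C \<in> carrier_mat a r" and D: "D \<in> carrier_mat b r" and r: "0 < r"
    and gram_B: "gram_mat B = transpose_mat C * C" and gram_B': "gram_mat B' = transpose_mat D * D"
    and \<alpha>: "0 \<le> \<alpha>" and \<beta>: "0 \<le> \<beta>"
    and lower: "\<And>z. z \<in> carrier_vec r \<Longrightarrow> \<alpha> * ((D *\<^sub>v z) \<bullet> (D *\<^sub>v z)) \<le> (C *\<^sub>v z) \<bullet> (C *\<^sub>v z)"
    and upper: "\<And>z. z \<in> carrier_vec r \<Longrightarrow> (C *\<^sub>v z) \<bullet> (C *\<^sub>v z) \<le> \<beta> * ((D *\<^sub>v z) \<bullet> (D *\<^sub>v z))"
  shows "sigma_max B \<le> sqrt \<beta> * sigma_max B'" "sqrt \<alpha> * sigma_min B' \<le> sigma_min B"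
proof -
  note max_B = sigma_max_gram[OF C r gram_B] and max_B' = sigma_max_gram[OF D r gram_B']
  note min_B = sigma_min_gram[OF C r gram_B] and min_B' = sigma_min_gram[OF D r gram_B']
  obtain z where z: "z \<in> carrier_vec r" "z \<noteq> 0\<^sub>v r"
    and Cz: "(C *\<^sub>v z) \<bullet> (C *\<^sub>v z) = (sigma_max B)^2 * (z \<bullet> z)"
    using max_B(3) by blast
  have "(sigma_max B)^2 * (z \<bullet> z) \<le> \<beta> * ((D *\<^sub>v z) \<bullet> (D *\<^sub>v z))" using Cz upper[OF z(1)] by simp
  also have "\<dots> \<le> \<beta> * ((sigma_max B')^2 * (z \<bullet> z))" using max_B'(2)[OF z(1)] \<beta> by (rule mult_left_mono)
  finally have "(sigma_max B)^2 \<le> \<beta> * (sigma_max B')^2"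
    using scalar_prod_self_pos[OF z] by (simp add: mult.assoc)
  then have "(sigma_max B)^2 \<le> (sqrt \<beta> * sigma_max B')^2" using \<beta> by (simp add: power_mult_distrib)
  then show "sigma_max B \<le> sqrt \<beta> * sigma_max B'" using max_B'(1) \<beta> by (auto intro: power2_le_imp_le)
  obtain z where z: "z \<in> carrier_vec r" "z \<noteq> 0\<^sub>v r"
    and Cz: "(C *\<^sub>v z) \<bullet> (C *\<^sub>v z) = (sigma_min B)^2 * (z \<bullet> z)"
    using min_B(3) by blast
  have "\<alpha> * ((sigma_min B')^2 * (z \<bullet> z)) \<le> \<alpha> * ((D *\<^sub>v z) \<bullet> (D *\<^sub>v z))"
    using min_B'(2)[OF z(1)] \<alpha> by (rule mult_left_mono)
  also have "\<dots> \<le> (sigma_min B)^2 * (z \<bullet> z)" using Cz lower[OF z(1)] by simp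
  finally have "\<alpha> * (sigma_min B')^2 \<le> (sigma_min B)^2"
    using scalar_prod_self_pos[OF z] by (simp add: mult.assoc)
  then have "(sqrt \<alpha> * sigma_min B')^2 \<le> (sigma_min B)^2" using \<alpha> by (simp add: power_mult_distrib)
  then show "sqrt \<alpha> * sigma_min B' \<le> sigma_min B" using min_B(1) by (rule power2_le_imp_le)
qed

lemma sigma_min_pos_if_injective:
  fixes B C :: "real mat"
  assumes C: "C \<in> carrier_mat a r" and r: "0 < r" and gram: "gram_mat B = transpose_mat C * C"
    and inj: "\<And>z. z \<in> carrier_vec r \<Longrightarrow> z \<noteq> 0\<^sub>v r \<Longrightarrow> C *\<^sub>v z \<noteq> 0\<^sub>v a"
  shows "0 < sigma_min B"
proof -
  note min_B = sigma_min_gram[OF C r gram]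
  obtain z where z: "z \<in> carrier_vec r" "z \<noteq> 0\<^sub>v r"
    and Cz: "(C *\<^sub>v z) \<bullet> (C *\<^sub>v z) = (sigma_min B)^2 * (z \<bullet> z)"
    using min_B(3) by blast
  have "0 < (C *\<^sub>v z) \<bullet> (C *\<^sub>v z)" using scalar_prod_self_pos[OF _ inj[OF z]] C z(1) by simp
  then have "sigma_min B \<noteq> 0" using Cz by auto
  then show ?thesis using min_B(1) by simp
qed

lemma cond_num_comparison:
  fixes B B' C D :: "real mat"
  assumes C: "C \<in> carrier_mat a r" and D: "D \<in> carrier_mat b r" and r: "0 < r"
    and gram_B: "gram_mat B = transpose_mat C * C" and gram_B': "gram_mat B' = transpose_mat D * D"
    and inj: "\<And>z. z \<in> carrier_vec r \<Longrightarrow> z \<noteq> 0\<^sub>v r \<Longrightarrow> D *\<^sub>v z \<noteq> 0\<^sub>v b"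
    and \<alpha>: "0 < \<alpha>" and \<beta>: "0 \<le> \<beta>"
    and lower: "\<And>z. z \<in> carrier_vec r \<Longrightarrow> \<alpha> * ((D *\<^sub>v z) \<bullet> (D *\<^sub>v z)) \<le> (C *\<^sub>v z) \<bullet> (C *\<^sub>v z)"
    and upper: "\<And>z. z \<in> carrier_vec r \<Longrightarrow> (C *\<^sub>v z) \<bullet> (C *\<^sub>v z) \<le> \<beta> * ((D *\<^sub>v z) \<bullet> (D *\<^sub>v z))"
  shows "0 < sigma_min B" "cond_num B \<le> sqrt \<beta> / sqrt \<alpha> * cond_num B'"
proof -
  note cmp = singular_value_comparison[OF C D r gram_B gram_B' less_imp_le[OF \<alpha>] \<beta> lower upper]
  have pos: "0 < sqrt \<alpha> * sigma_min B'"
    using sigma_min_pos_if_injective[OF D r gram_B' inj] \<alpha> by simp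
  then show "0 < sigma_min B" using cmp(2) by linarith
  have "cond_num B \<le> (sqrt \<beta> * sigma_max B') / (sqrt \<alpha> * sigma_min B')"
    unfolding cond_num_def
    using cmp sigma_max_gram(1)[OF D r gram_B'] \<beta> pos by (intro frac_le) auto
  then show "cond_num B \<le> sqrt \<beta> / sqrt \<alpha> * cond_num B'" by (simp add: cond_num_def)
qed

lemma cond_num_nonneg:
  fixes B C :: "real mat"
  assumes "C \<in> carrier_mat a r" and "0 < r" and "gram_mat B = transpose_mat C * C"
  shows "0 \<le> cond_num B"
  unfolding cond_num_def using sigma_max_gram(1)[OF assms] sigma_min_gram(1)[OF assms] by simp

section \<open>The null-space basis\<close>

lemma append_vec_carrier_0: "w \<in> carrier_vec 0 \<Longrightarrow> v @\<^sub>v w = v"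
  by (intro eq_vecI) auto

lemma zero_vec_append: "0\<^sub>v m @\<^sub>v 0\<^sub>v k = 0\<^sub>v (m + k)"
  by (intro eq_vecI) auto

lemma basis_part_carrier: "A \<in> carrier_mat m n \<Longrightarrow> basis_part A \<in> carrier_mat m m"
  unfolding basis_part_def by auto

lemma nonbasis_part_carrier: "A \<in> carrier_mat m n \<Longrightarrow> nonbasis_part A \<in> carrier_mat m (n - m)"
  unfolding nonbasis_part_def by auto

lemma basis_nonbasis_split:
  assumes "A \<in> carrier_mat m n" and "m \<le> n"
  shows "A = four_block_mat (basis_part A) (nonbasis_part A) (0\<^sub>m 0 m) (0\<^sub>m 0 (n - m))"
  using assms by (intro eq_matI) (auto simp: basis_part_def nonbasis_part_def)

lemma mat_inv:
  fixes B :: "real mat"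
  assumes B: "B \<in> carrier_mat m m" and det: "det B \<noteq> 0"
  shows "mat_inv B \<in> carrier_mat m m" "B * mat_inv B = 1\<^sub>m m"
proof -
  obtain C where "C \<in> carrier_mat m m" "C * B = 1\<^sub>m m" "B * C = 1\<^sub>m m"
    using det_non_zero_imp_unit[OF B det] unfolding Units_def ring_mat_def by auto
  then have "\<exists>C. C \<in> carrier_mat (dim_row B) (dim_row B) \<and> C * B = 1\<^sub>m (dim_row B)
      \<and> B * C = 1\<^sub>m (dim_row B)"
    using B by auto
  from someI_ex[OF this] show "mat_inv B \<in> carrier_mat m m" "B * mat_inv B = 1\<^sub>m m"
    unfolding mat_inv_def using B by auto
qed

lemma transpose_injective_if_basis_nonsingular:
  fixes A :: "real mat"
  assumes A: "A \<in> carrier_mat m n" and mn: "m \<le> n" and det: "det (basis_part A) \<noteq> 0"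
    and v: "v \<in> carrier_vec m" and zero: "transpose_mat A *\<^sub>v v = 0\<^sub>v n"
  shows "v = 0\<^sub>v m"
proof -
  let ?B = "basis_part A"
  have B: "?B \<in> carrier_mat m m" by (rule basis_part_carrier[OF A])
  have "transpose_mat ?B *\<^sub>v v = 0\<^sub>v m"
  proof (rule eq_vecI)
    fix j assume "j < dim_vec (0\<^sub>v m)"
    then have j: "j < m" by simp
    have "(transpose_mat ?B *\<^sub>v v) $ j = (transpose_mat A *\<^sub>v v) $ j"
      using j mn A v by (auto simp: basis_part_def scalar_prod_def)
    then show "(transpose_mat ?B *\<^sub>v v) $ j = 0\<^sub>v m $ j" using zero j mn by simp
  qed (use B in simp)
  moreover have "det (transpose_mat ?B) \<noteq> 0" using det det_transpose[OF B] by simp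
  ultimately show ?thesis using det_0_iff_vec_prod_zero[of "transpose_mat ?B" m] B v by auto
qed

lemma null_basis_carrier:
  fixes A :: "real mat"
  assumes A: "A \<in> carrier_mat m n" and mn: "m \<le> n" and det: "det (basis_part A) \<noteq> 0"
  shows "null_basis A \<in> carrier_mat n (n - m)"
proof -
  have "mat_inv (basis_part A) * nonbasis_part A \<in> carrier_mat m (n - m)"
    using mat_inv(1)[OF basis_part_carrier[OF A] det] nonbasis_part_carrier[OF A] by simp
  then show ?thesis using A mn unfolding null_basis_def Let_def by (auto intro!: carrier_matI)
qed

lemma null_basis_mult_vec:
  fixes A :: "real mat"
  assumes A: "A \<in> carrier_mat m n" and det: "det (basis_part A) \<noteq> 0"
    and u: "u \<in> carrier_vec (n - m)"
  shows "null_basis A *\<^sub>v u = ((mat_inv (basis_part A) * nonbasis_part A) *\<^sub>v u) @\<^sub>v (- u)"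
proof -
  define K where "K = mat_inv (basis_part A) * nonbasis_part A"
  have K: "K \<in> carrier_mat m (n - m)"
    unfolding K_def using mat_inv(1)[OF basis_part_carrier[OF A] det] nonbasis_part_carrier[OF A] by simp
  have "null_basis A *\<^sub>v u
      = four_block_mat K (0\<^sub>m m 0) (- 1\<^sub>m (n - m)) (0\<^sub>m (n - m) 0) *\<^sub>v (u @\<^sub>v 0\<^sub>v 0)"
    unfolding null_basis_def Let_def K_def using A by (simp add: append_vec_carrier_0)
  also have "\<dots> = (K *\<^sub>v u + 0\<^sub>m m 0 *\<^sub>v 0\<^sub>v 0) @\<^sub>v (- 1\<^sub>m (n - m) *\<^sub>v u + 0\<^sub>m (n - m) 0 *\<^sub>v 0\<^sub>v 0)"
    by (rule four_block_mat_mult_vec) (use K u in auto)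
  also have "\<dots> = (K *\<^sub>v u) @\<^sub>v (- u)" using K u by (intro arg_cong2[where f = append_vec] eq_vecI) auto
  finally show ?thesis unfolding K_def .
qed

lemma null_basis_injective:
  fixes A :: "real mat"
  assumes A: "A \<in> carrier_mat m n" and mn: "m \<le> n" and det: "det (basis_part A) \<noteq> 0"
    and u: "u \<in> carrier_vec (n - m)" and zero: "null_basis A *\<^sub>v u = 0\<^sub>v n"
  shows "u = 0\<^sub>v (n - m)"
proof -
  have "((mat_inv (basis_part A) * nonbasis_part A) *\<^sub>v u) @\<^sub>v (- u) = 0\<^sub>v m @\<^sub>v 0\<^sub>v (n - m)"
    using zero mn by (simp add: null_basis_mult_vec[OF A det u] zero_vec_append)
  moreover have "(mat_inv (basis_part A) * nonbasis_part A) *\<^sub>v u \<in> carrier_vec m"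
    using mat_inv(1)[OF basis_part_carrier[OF A] det] nonbasis_part_carrier[OF A] u by simp
  ultimately have "- u = 0\<^sub>v (n - m)" by simp
  then show ?thesis by (metis uminus_uminus_vec uminus_zero_vec)
qed

lemma null_basis_in_kernel:
  fixes A :: "real mat"
  assumes A: "A \<in> carrier_mat m n" and mn: "m \<le> n" and det: "det (basis_part A) \<noteq> 0"
    and u: "u \<in> carrier_vec (n - m)"
  shows "A *\<^sub>v (null_basis A *\<^sub>v u) = 0\<^sub>v m"
proof -
  let ?B = "basis_part A" and ?N = "nonbasis_part A" and ?Bi = "mat_inv (basis_part A)"
  have B: "?B \<in> carrier_mat m m" and N: "?N \<in> carrier_mat m (n - m)"
    using basis_part_carrier[OF A] nonbasis_part_carrier[OF A] .
  note Bi = mat_inv[OF B det]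
  have K: "?Bi * ?N \<in> carrier_mat m (n - m)" using Bi N by simp
  have Ku: "(?Bi * ?N) *\<^sub>v u \<in> carrier_vec m" using K u by simp
  have "A *\<^sub>v (null_basis A *\<^sub>v u)
      = four_block_mat ?B ?N (0\<^sub>m 0 m) (0\<^sub>m 0 (n - m)) *\<^sub>v (((?Bi * ?N) *\<^sub>v u) @\<^sub>v (- u))"
    using null_basis_mult_vec[OF A det u] basis_nonbasis_split[OF A mn] by simp
  also have "\<dots> = (?B *\<^sub>v ((?Bi * ?N) *\<^sub>v u) + ?N *\<^sub>v (- u))
      @\<^sub>v (0\<^sub>m 0 m *\<^sub>v ((?Bi * ?N) *\<^sub>v u) + 0\<^sub>m 0 (n - m) *\<^sub>v (- u))"
    by (rule four_block_mat_mult_vec) (use B N Ku u in auto)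
  also have "\<dots> = ?B *\<^sub>v ((?Bi * ?N) *\<^sub>v u) + ?N *\<^sub>v (- u)"
    by (intro append_vec_carrier_0 add_carrier_vec mult_mat_vec_carrier zero_carrier_mat) (use K Ku u in auto)
  also have "?B *\<^sub>v ((?Bi * ?N) *\<^sub>v u) = ?N *\<^sub>v u"
    using Bi B N u by (simp add: assoc_mult_mat_vec[symmetric, of _ m m _ m] )
  also have "?N *\<^sub>v u + ?N *\<^sub>v (- u) = 0\<^sub>v m"
    using N u by (intro eq_vecI) (auto simp: scalar_prod_uminus_right)
  finally show ?thesis .
qed

section \<open>The matrices M and VAQ\<close>

lemma diag_vec_carrier: "x \<in> carrier_vec n \<Longrightarrow> diag_vec x \<in> carrier_mat n n"
  unfolding diag_vec_def by auto

lemma diag_vec_mult_vec: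
  fixes x w :: "real vec"
  assumes x: "x \<in> carrier_vec n" and w: "w \<in> carrier_vec n" and i: "i < n"
  shows "(diag_vec x *\<^sub>v w) $ i = x $ i * w $ i"
proof -
  have "(diag_vec x *\<^sub>v w) $ i = (\<Sum>j\<in>{0..<n}. (if i = j then x $ i else 0) * w $ j)"
    using x w i unfolding diag_vec_def by (auto simp: scalar_prod_def row_def)
  also have "\<dots> = (\<Sum>j\<in>{0..<n}. (if i = j then x $ i * w $ j else 0))"
    by (rule sum.cong) auto
  also have "\<dots> = x $ i * w $ i" using i by (subst sum.delta') auto
  finally show ?thesis .
qed

(* The horizontal block matrix [B1 B2] is encoded as a four-block matrix with an empty bottom row. *)
definition newton_mat :: "real mat \<Rightarrow> real mat \<Rightarrow> real vec \<Rightarrow> real vec \<Rightarrow> real mat" where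
  "newton_mat A Q x s = (let m = dim_row A; n = dim_col A; V = null_basis A in
     four_block_mat (diag_vec s * V + diag_vec x * Q * V) (- (diag_vec x * transpose_mat A))
       (0\<^sub>m 0 (n - m)) (0\<^sub>m 0 m))"

definition vaq_mat :: "real mat \<Rightarrow> real mat \<Rightarrow> real mat" where
  "vaq_mat A Q = (let m = dim_row A; n = dim_col A; V = null_basis A in
     four_block_mat (transpose_mat V) (0\<^sub>m (n - m) n) (0\<^sub>m m n) A *
     four_block_mat (1\<^sub>m n) (- Q) (0\<^sub>m n n) (1\<^sub>m n))"

lemma newton_mat_carrier:
  assumes A: "A \<in> carrier_mat m n" and mn: "m \<le> n" and det: "det (basis_part A) \<noteq> 0"
    and Q: "Q \<in> carrier_mat n n" and x: "x \<in> carrier_vec n" and s: "s \<in> carrier_vec n"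
  shows "newton_mat A Q x s \<in> carrier_mat n n"
  using A mn null_basis_carrier[OF A mn det] diag_vec_carrier[OF x] diag_vec_carrier[OF s] Q
  unfolding newton_mat_def Let_def by (auto intro!: carrier_matI)

lemma vaq_mat_carrier:
  assumes A: "A \<in> carrier_mat m n" and mn: "m \<le> n" and det: "det (basis_part A) \<noteq> 0"
    and Q: "Q \<in> carrier_mat n n"
  shows "vaq_mat A Q \<in> carrier_mat n (n + n)"
  using A mn null_basis_carrier[OF A mn det] Q
  unfolding vaq_mat_def Let_def by (auto intro!: carrier_matI)

lemma newton_mat_mult_append:
  fixes A Q :: "real mat" and x s :: "real vec"
  assumes A: "A \<in> carrier_mat m n" and mn: "m \<le> n" and det: "det (basis_part A) \<noteq> 0"
    and Q: "Q \<in> carrier_mat n n" and x: "x \<in> carrier_vec n" and s: "s \<in> carrier_vec n"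
    and u: "u \<in> carrier_vec (n - m)" and v: "v \<in> carrier_vec m"
  defines "p \<equiv> null_basis A *\<^sub>v u"
  shows "newton_mat A Q x s *\<^sub>v (u @\<^sub>v v)
    = diag_vec s *\<^sub>v p + diag_vec x *\<^sub>v (Q *\<^sub>v p) + - (diag_vec x *\<^sub>v (transpose_mat A *\<^sub>v v))"
proof -
  let ?V = "null_basis A" and ?X = "diag_vec x" and ?S = "diag_vec s"
  have V: "?V \<in> carrier_mat n (n - m)" by (rule null_basis_carrier[OF A mn det])
  have X: "?X \<in> carrier_mat n n" and S: "?S \<in> carrier_mat n n"
    using diag_vec_carrier x s by auto
  have "newton_mat A Q x s *\<^sub>v (u @\<^sub>v v)
      = ((?S * ?V + ?X * Q * ?V) *\<^sub>v u + (- (?X * transpose_mat A)) *\<^sub>v v)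
        @\<^sub>v (0\<^sub>m 0 (n - m) *\<^sub>v u + 0\<^sub>m 0 m *\<^sub>v v)"
    unfolding newton_mat_def Let_def using A
    by (simp, intro four_block_mat_mult_vec) (use S V X Q A u v in auto)
  also have "\<dots> = (?S * ?V + ?X * Q * ?V) *\<^sub>v u + (- (?X * transpose_mat A)) *\<^sub>v v"
    by (intro append_vec_carrier_0 add_carrier_vec mult_mat_vec_carrier zero_carrier_mat) (use u v in auto)
  also have "(?S * ?V + ?X * Q * ?V) *\<^sub>v u = ?S *\<^sub>v p + ?X *\<^sub>v (Q *\<^sub>v p)"
    unfolding p_def using S V X Q u
    by (simp add: add_mult_distrib_mat_vec[of _ n "n - m"] assoc_mult_mat_vec[of _ n n _ "n - m"])
  also have "(- (?X * transpose_mat A)) *\<^sub>v v = - (?X *\<^sub>v (transpose_mat A *\<^sub>v v))"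
    using X A v by simp
  finally show ?thesis .
qed

lemma newton_mat_mult_vec:
  fixes A Q :: "real mat" and x s :: "real vec"
  assumes A: "A \<in> carrier_mat m n" and mn: "m \<le> n" and det: "det (basis_part A) \<noteq> 0"
    and Q: "Q \<in> carrier_mat n n" and x: "x \<in> carrier_vec n" and s: "s \<in> carrier_vec n"
    and u: "u \<in> carrier_vec (n - m)" and v: "v \<in> carrier_vec m"
  defines "p \<equiv> null_basis A *\<^sub>v u" and "t \<equiv> transpose_mat A *\<^sub>v v - Q *\<^sub>v (null_basis A *\<^sub>v u)"
  shows "newton_mat A Q x s *\<^sub>v (u @\<^sub>v v) = vec n (\<lambda>i. s $ i * p $ i - x $ i * t $ i)"
proof (rule eq_vecI)
  have p: "p \<in> carrier_vec n" and Qp: "Q *\<^sub>v p \<in> carrier_vec n"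
    and Av: "transpose_mat A *\<^sub>v v \<in> carrier_vec n"
    unfolding p_def using null_basis_carrier[OF A mn det] u Q A v by auto
  fix i assume "i < dim_vec (vec n (\<lambda>i. s $ i * p $ i - x $ i * t $ i))"
  then have i: "i < n" by simp
  have "(newton_mat A Q x s *\<^sub>v (u @\<^sub>v v)) $ i
      = s $ i * p $ i + x $ i * (Q *\<^sub>v p) $ i - x $ i * (transpose_mat A *\<^sub>v v) $ i"
    unfolding newton_mat_mult_append[OF A mn det Q x s u v, folded p_def]
    using i diag_vec_carrier[OF x] diag_vec_carrier[OF s] p Qp Av
    by (simp add: diag_vec_mult_vec[OF s p i] diag_vec_mult_vec[OF x Qp i] diag_vec_mult_vec[OF x Av i])
  also have "\<dots> = s $ i * p $ i - x $ i * t $ i"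
    unfolding t_def p_def[symmetric] using i carrier_vecD[OF Qp] by (simp add: algebra_simps)
  finally show "(newton_mat A Q x s *\<^sub>v (u @\<^sub>v v)) $ i = vec n (\<lambda>i. s $ i * p $ i - x $ i * t $ i) $ i"
    using i by simp
qed (use newton_mat_carrier[OF A mn det Q x s] in simp)

lemma transpose_vaq_mat_mult_vec:
  fixes A Q :: "real mat"
  assumes A: "A \<in> carrier_mat m n" and mn: "m \<le> n" and det: "det (basis_part A) \<noteq> 0"
    and Q: "Q \<in> carrier_mat n n" and Q_sym: "transpose_mat Q = Q"
    and u: "u \<in> carrier_vec (n - m)" and v: "v \<in> carrier_vec m"
  defines "p \<equiv> null_basis A *\<^sub>v u"
  shows "transpose_mat (vaq_mat A Q) *\<^sub>v (u @\<^sub>v v) = p @\<^sub>v (transpose_mat A *\<^sub>v v - Q *\<^sub>v p)"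
proof -
  define V where "V = null_basis A"
  have V: "V \<in> carrier_mat n (n - m)" unfolding V_def by (rule null_basis_carrier[OF A mn det])
  define F1 where "F1 = four_block_mat (transpose_mat V) (0\<^sub>m (n - m) n) (0\<^sub>m m n) A"
  define F2 where "F2 = four_block_mat (1\<^sub>m n) (- Q) (0\<^sub>m n n) (1\<^sub>m n)"
  have F1: "F1 \<in> carrier_mat (n - m + m) (n + n)" unfolding F1_def using V A by auto
  have F2: "F2 \<in> carrier_mat (n + n) (n + n)" unfolding F2_def using Q by auto
  have vaq: "vaq_mat A Q = F1 * F2" unfolding vaq_mat_def Let_def F1_def F2_def V_def using A by simp
  have T1: "transpose_mat F1 = four_block_mat V (0\<^sub>m n m) (0\<^sub>m n (n - m)) (transpose_mat A)"
    unfolding F1_def by (subst transpose_four_block_mat[of _ "n - m" n _ n _ m]) (use V A in auto)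
  have T2: "transpose_mat F2 = four_block_mat (1\<^sub>m n) (0\<^sub>m n n) (- Q) (1\<^sub>m n)"
    unfolding F2_def
    by (subst transpose_four_block_mat[of _ n n _ n _ n]) (use Q Q_sym in \<open>auto simp: transpose_uminus\<close>)
  define a where "a = transpose_mat A *\<^sub>v v"
  have p: "p \<in> carrier_vec n" unfolding p_def using null_basis_carrier[OF A mn det] u by simp
  have a: "a \<in> carrier_vec n" unfolding a_def using A v by simp
  have "transpose_mat F1 *\<^sub>v (u @\<^sub>v v) = (V *\<^sub>v u + 0\<^sub>m n m *\<^sub>v v) @\<^sub>v (0\<^sub>m n (n - m) *\<^sub>v u + transpose_mat A *\<^sub>v v)"
    unfolding T1 by (rule four_block_mat_mult_vec) (use V A u v in auto)
  also have "\<dots> = p @\<^sub>v a"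
    unfolding p_def a_def V_def[symmetric] using V A u v by (intro arg_cong2[where f = append_vec] eq_vecI) auto
  finally have s1: "transpose_mat F1 *\<^sub>v (u @\<^sub>v v) = p @\<^sub>v a" .
  have "transpose_mat F2 *\<^sub>v (p @\<^sub>v a) = (1\<^sub>m n *\<^sub>v p + 0\<^sub>m n n *\<^sub>v a) @\<^sub>v (- Q *\<^sub>v p + 1\<^sub>m n *\<^sub>v a)"
    unfolding T2 by (rule four_block_mat_mult_vec) (use Q p a in auto)
  also have "\<dots> = p @\<^sub>v (a - Q *\<^sub>v p)"
    using Q p a by (intro arg_cong2[where f = append_vec] eq_vecI) auto
  finally have s2: "transpose_mat F2 *\<^sub>v (p @\<^sub>v a) = p @\<^sub>v (a - Q *\<^sub>v p)" .
  have "transpose_mat (vaq_mat A Q) *\<^sub>v (u @\<^sub>v v) = transpose_mat F2 *\<^sub>v (transpose_mat F1 *\<^sub>v (u @\<^sub>v v))"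
    unfolding vaq transpose_mult[OF F1 F2] using F1 F2 u v by (simp add: assoc_mult_mat_vec[of _ _ "n + n" _ n])
  also have "\<dots> = p @\<^sub>v (a - Q *\<^sub>v p)" unfolding s1 s2 ..
  finally show ?thesis unfolding a_def .
qed

lemma transpose_vaq_mat_injective:
  fixes A Q :: "real mat"
  assumes A: "A \<in> carrier_mat m n" and mn: "m \<le> n" and det: "det (basis_part A) \<noteq> 0"
    and Q: "Q \<in> carrier_mat n n" and Q_sym: "transpose_mat Q = Q"
    and z: "z \<in> carrier_vec n" and zero: "transpose_mat (vaq_mat A Q) *\<^sub>v z = 0\<^sub>v (n + n)"
  shows "z = 0\<^sub>v n"
proof -
  define u where "u = vec_first z (n - m)"
  define v where "v = vec_last z m"
  have u: "u \<in> carrier_vec (n - m)" and v: "v \<in> carrier_vec m" unfolding u_def v_def by auto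
  have z_split: "z = u @\<^sub>v v" unfolding u_def v_def using z mn by simp
  define p where "p = null_basis A *\<^sub>v u"
  have p: "p \<in> carrier_vec n" unfolding p_def using null_basis_carrier[OF A mn det] u by simp
  have "p @\<^sub>v (transpose_mat A *\<^sub>v v - Q *\<^sub>v p) = 0\<^sub>v n @\<^sub>v 0\<^sub>v n"
    using zero transpose_vaq_mat_mult_vec[OF A mn det Q Q_sym u v]
    unfolding z_split p_def zero_vec_append by simp
  then have p0: "p = 0\<^sub>v n" and t0: "transpose_mat A *\<^sub>v v - Q *\<^sub>v p = 0\<^sub>v n" using p by auto
  have "transpose_mat A *\<^sub>v v = transpose_mat A *\<^sub>v v - Q *\<^sub>v p"
    using p0 A Q v by (intro eq_vecI) auto
  then have "transpose_mat A *\<^sub>v v = 0\<^sub>v n" using t0 by simp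
  then have "v = 0\<^sub>v m" by (rule transpose_injective_if_basis_nonsingular[OF A mn det v])
  moreover have "u = 0\<^sub>v (n - m)" using null_basis_injective[OF A mn det u] p0 by (simp add: p_def)
  ultimately show ?thesis using z_split mn zero_vec_append[of "n - m" m] by simp
qed

lemma kernel_scalar_prod_nonpos:
  fixes A Q :: "real mat"
  assumes A: "A \<in> carrier_mat m n" and Q: "Q \<in> carrier_mat n n" and psd: "psd Q"
    and p: "p \<in> carrier_vec n" and Ap: "A *\<^sub>v p = 0\<^sub>v m" and v: "v \<in> carrier_vec m"
  shows "p \<bullet> (transpose_mat A *\<^sub>v v - Q *\<^sub>v p) \<le> 0"
proof -
  have Av: "transpose_mat A *\<^sub>v v \<in> carrier_vec n" and Qp: "Q *\<^sub>v p \<in> carrier_vec n"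
    using A v Q p by auto
  have "p \<bullet> (transpose_mat A *\<^sub>v v) = v \<bullet> (A *\<^sub>v p)"
    using comm_scalar_prod[OF p Av] transpose_vec_mult_scalar[OF A p v] by simp
  also have "\<dots> = 0" using Ap v by simp
  finally have "p \<bullet> (transpose_mat A *\<^sub>v v) = 0" .
  moreover have "0 \<le> p \<bullet> (Q *\<^sub>v p)" using psd Q p by (auto simp: psd_def)
  ultimately show ?thesis by (simp add: scalar_prod_minus_distrib[OF p Av Qp])
qed

lemma sum_sq_scaled_diff_le:
  fixes p t x s :: "nat \<Rightarrow> real" and \<omega> :: real
  assumes bounds: "\<And>i. i < n \<Longrightarrow> 0 < x i \<and> 0 < s i \<and> x i \<le> \<omega> \<and> s i \<le> \<omega>"
  shows "(\<Sum>i<n. (s i * p i - x i * t i)^2) \<le> 2 * \<omega>^2 * ((\<Sum>i<n. (p i)^2) + (\<Sum>i<n. (t i)^2))"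
proof -
  have "(s i * p i - x i * t i)^2 \<le> 2 * \<omega>^2 * (p i)^2 + 2 * \<omega>^2 * (t i)^2" if i: "i < n" for i
  proof -
    have "(s i * p i - x i * t i)^2 \<le> 2 * (s i)^2 * (p i)^2 + 2 * (x i)^2 * (t i)^2"
      using sum_squares_ge_zero[of "s i * p i + x i * t i" 0] by (simp add: power2_eq_square algebra_simps)
    moreover have "(s i)^2 \<le> \<omega>^2" "(x i)^2 \<le> \<omega>^2" using bounds[OF i] by (auto intro: power_mono)
    ultimately show ?thesis
      by (smt (verit) mult_right_mono zero_le_power2)
  qed
  then have "(\<Sum>i<n. (s i * p i - x i * t i)^2) \<le> (\<Sum>i<n. 2 * \<omega>^2 * (p i)^2 + 2 * \<omega>^2 * (t i)^2)"
    by (intro sum_mono) auto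
  also have "\<dots> = 2 * \<omega>^2 * ((\<Sum>i<n. (p i)^2) + (\<Sum>i<n. (t i)^2))"
    by (simp add: sum.distrib sum_distrib_left distrib_left)
  finally show ?thesis .
qed

lemma sum_sq_scaled_diff_ge:
  fixes p t x s :: "nat \<Rightarrow> real" and \<omega> \<beta> :: real
  assumes bounds: "\<And>i. i < n \<Longrightarrow> 0 < x i \<and> 0 < s i \<and> x i \<le> \<omega> \<and> s i \<le> \<omega> \<and> \<beta> \<le> x i * s i"
    and \<beta>: "0 < \<beta>" and obtuse: "(\<Sum>i<n. p i * t i) \<le> 0"
  shows "\<beta>^2 / \<omega>^2 * ((\<Sum>i<n. (p i)^2) + (\<Sum>i<n. (t i)^2)) \<le> (\<Sum>i<n. (s i * p i - x i * t i)^2)"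
proof -
  define c where "c = \<beta> / \<omega>^2"
  have termwise: "\<beta> * (c * (p i)^2 + c * (t i)^2 - 2 * (p i * t i)) \<le> (s i * p i - x i * t i)^2"
    if i: "i < n" for i
  proof -
    have x: "0 < x i" and s: "0 < s i" and x\<omega>: "x i \<le> \<omega>" and s\<omega>: "s i \<le> \<omega>" and xs: "\<beta> \<le> x i * s i"
      using bounds[OF i] by auto
    define B where "B = (s i / x i) * (p i)^2 + (x i / s i) * (t i)^2 - 2 * (p i * t i)"
    have eq: "(s i * p i - x i * t i)^2 = (x i * s i) * B"
      unfolding B_def using x s by (simp add: field_simps power2_eq_square)
    then have B: "0 \<le> B" using x s by (metis zero_le_power2 zero_le_mult_iff mult_pos_pos not_less)
    have "c \<le> (x i * s i) / (x i)^2" unfolding c_def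
      by (rule frac_le) (use \<beta> xs x x\<omega> in \<open>auto intro: power_mono\<close>)
    then have c1: "c \<le> s i / x i" using x by (simp add: power2_eq_square)
    have "c \<le> (x i * s i) / (s i)^2" unfolding c_def
      by (rule frac_le) (use \<beta> xs s s\<omega> in \<open>auto intro: power_mono\<close>)
    then have c2: "c \<le> x i / s i" using s by (simp add: power2_eq_square)
    have "c * (p i)^2 + c * (t i)^2 - 2 * (p i * t i) \<le> B"
      unfolding B_def using c1 c2 by (intro diff_right_mono add_mono mult_right_mono) auto
    then have "\<beta> * (c * (p i)^2 + c * (t i)^2 - 2 * (p i * t i)) \<le> \<beta> * B"
      using \<beta> by (intro mult_left_mono) auto
    also have "\<dots> \<le> (x i * s i) * B" using xs B by (intro mult_right_mono)
    finally show ?thesis using eq by simp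
  qed
  have "\<beta> * c * ((\<Sum>i<n. (p i)^2) + (\<Sum>i<n. (t i)^2)) - 2 * \<beta> * (\<Sum>i<n. p i * t i)
      = (\<Sum>i<n. \<beta> * (c * (p i)^2 + c * (t i)^2 - 2 * (p i * t i)))"
    by (simp add: sum.distrib sum_subtractf sum_distrib_left algebra_simps)
  also have "\<dots> \<le> (\<Sum>i<n. (s i * p i - x i * t i)^2)" by (intro sum_mono termwise) auto
  finally show ?thesis
    using \<beta> obtuse mult_left_mono[OF obtuse, of "2 * \<beta>"] by (simp add: c_def power2_eq_square)
qed

lemma newton_mat_norm_bounds:
  fixes A Q :: "real mat" and x s z :: "real vec" and \<omega> \<beta> :: real
  assumes A: "A \<in> carrier_mat m n" and mn: "m \<le> n" and det: "det (basis_part A) \<noteq> 0"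
    and Q: "Q \<in> carrier_mat n n" and psd: "psd Q"
    and x: "x \<in> carrier_vec n" and s: "s \<in> carrier_vec n"
    and bounds: "\<And>i. i < n \<Longrightarrow> 0 < x $ i \<and> 0 < s $ i \<and> x $ i \<le> \<omega> \<and> s $ i \<le> \<omega> \<and> \<beta> \<le> x $ i * s $ i"
    and \<beta>: "0 < \<beta>" and z: "z \<in> carrier_vec n"
  defines "Mz \<equiv> newton_mat A Q x s *\<^sub>v z" and "Wz \<equiv> transpose_mat (vaq_mat A Q) *\<^sub>v z"
  shows "Mz \<bullet> Mz \<le> 2 * \<omega>^2 * (Wz \<bullet> Wz)" "\<beta>^2 / \<omega>^2 * (Wz \<bullet> Wz) \<le> Mz \<bullet> Mz"
proof -
  have Q_sym: "transpose_mat Q = Q" using psd by (simp add: psd_def)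
  define u where "u = vec_first z (n - m)"
  define v where "v = vec_last z m"
  have u: "u \<in> carrier_vec (n - m)" and v: "v \<in> carrier_vec m" unfolding u_def v_def by auto
  have z_split: "z = u @\<^sub>v v" unfolding u_def v_def using z mn by simp
  define p where "p = null_basis A *\<^sub>v u"
  define t where "t = transpose_mat A *\<^sub>v v - Q *\<^sub>v p"
  have p: "p \<in> carrier_vec n" and t: "t \<in> carrier_vec n"
    unfolding p_def t_def using null_basis_carrier[OF A mn det] u A v Q by auto
  have "Wz = p @\<^sub>v t"
    unfolding Wz_def z_split p_def t_def by (rule transpose_vaq_mat_mult_vec[OF A mn det Q Q_sym u v])
  then have W: "Wz \<bullet> Wz = (\<Sum>i<n. (p $ i)^2) + (\<Sum>i<n. (t $ i)^2)"
    using p t by (simp add: scalar_prod_append[OF p t p t] scalar_prod_self_eq_sum)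
  have "Mz = vec n (\<lambda>i. s $ i * p $ i - x $ i * t $ i)"
    unfolding Mz_def z_split p_def t_def by (rule newton_mat_mult_vec[OF A mn det Q x s u v])
  then have M: "Mz \<bullet> Mz = (\<Sum>i<n. (s $ i * p $ i - x $ i * t $ i)^2)"
    by (simp add: scalar_prod_self_eq_sum)
  have "p \<bullet> t \<le> 0"
    unfolding t_def using null_basis_in_kernel[OF A mn det u] p v
    by (intro kernel_scalar_prod_nonpos[OF A Q psd]) (auto simp: p_def)
  then have obtuse: "(\<Sum>i<n. p $ i * t $ i) \<le> 0"
    using t by (simp add: scalar_prod_def lessThan_atLeast0)
  show "Mz \<bullet> Mz \<le> 2 * \<omega>^2 * (Wz \<bullet> Wz)"
    unfolding M W using bounds by (intro sum_sq_scaled_diff_le) blast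
  show "\<beta>^2 / \<omega>^2 * (Wz \<bullet> Wz) \<le> Mz \<bullet> Mz"
    unfolding M W using bounds \<beta> obtuse by (intro sum_sq_scaled_diff_ge) blast+
qed

lemma newton_mat_cond_num_le:
  fixes A Q :: "real mat" and x s :: "real vec" and \<omega> \<beta> :: real
  assumes A: "A \<in> carrier_mat m n" and mn: "m \<le> n" and det: "det (basis_part A) \<noteq> 0"
    and Q: "Q \<in> carrier_mat n n" and psd: "psd Q"
    and x: "x \<in> carrier_vec n" and s: "s \<in> carrier_vec n" and n: "0 < n"
    and bounds: "\<And>i. i < n \<Longrightarrow> 0 < x $ i \<and> 0 < s $ i \<and> x $ i \<le> \<omega> \<and> s $ i \<le> \<omega> \<and> \<beta> \<le> x $ i * s $ i"
    and \<beta>: "0 < \<beta>"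
  shows "0 < sigma_min (newton_mat A Q x s)"
    "cond_num (newton_mat A Q x s) \<le> sqrt 2 * \<omega>^2 / \<beta> * cond_num (vaq_mat A Q)"
proof -
  define M where "M = newton_mat A Q x s"
  define W where "W = transpose_mat (vaq_mat A Q)"
  have M: "M \<in> carrier_mat n n" unfolding M_def by (rule newton_mat_carrier[OF A mn det Q x s])
  have VAQ: "vaq_mat A Q \<in> carrier_mat n (n + n)" by (rule vaq_mat_carrier[OF A mn det Q])
  then have W: "W \<in> carrier_mat (n + n) n" by (simp add: W_def)
  have gram_M: "gram_mat M = transpose_mat M * M" using M by (simp add: gram_mat_def)
  have gram_VAQ: "gram_mat (vaq_mat A Q) = transpose_mat W * W" using VAQ n by (simp add: gram_mat_def W_def)
  have inj: "W *\<^sub>v z \<noteq> 0\<^sub>v (n + n)" if "z \<in> carrier_vec n" "z \<noteq> 0\<^sub>v n" for z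
    using transpose_vaq_mat_injective[OF A mn det Q _ that(1)] psd that(2) by (auto simp: W_def psd_def)
  have \<omega>: "0 < \<omega>" using bounds[OF n] by linarith
  note norms = newton_mat_norm_bounds[OF A mn det Q psd x s bounds \<beta>, folded M_def W_def]
  note cmp = cond_num_comparison[OF M W n gram_M gram_VAQ inj, of "\<beta>^2 / \<omega>^2" "2 * \<omega>^2"]
  show "0 < sigma_min (newton_mat A Q x s)" using cmp(1) norms \<beta> \<omega> by (simp add: M_def)
  have "sqrt (2 * \<omega>^2) / sqrt (\<beta>^2 / \<omega>^2) = sqrt 2 * \<omega>^2 / \<beta>"
    using \<omega> \<beta> by (simp add: real_sqrt_mult real_sqrt_divide power2_eq_square)
  then show "cond_num (newton_mat A Q x s) \<le> sqrt 2 * \<omega>^2 / \<beta> * cond_num (vaq_mat A Q)"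
    using cmp(2) norms \<beta> \<omega> by (simp add: M_def)
qed

section \<open>Points of the neighbourhood\<close>

lemma abs_index_le_vnorm2:
  assumes "i < dim_vec v"
  shows "\<bar>v $ i\<bar> \<le> vnorm2 v"
proof -
  have "(v $ i)^2 \<le> (\<Sum>j<dim_vec v. (v $ j)^2)"
    using assms by (intro member_le_sum) auto
  then show ?thesis unfolding vnorm2_def by (intro real_le_rsqrt) simp
qed

lemma neighbourhood_product_lower_bound:
  assumes nb: "neighbourhood A b c Q \<theta> x y s" and A: "A \<in> carrier_mat m n" and i: "i < n"
  shows "(1 - \<theta>) * ((x \<bullet> s) / real n) \<le> x $ i * s $ i"
proof -
  define \<mu> where "\<mu> = (x \<bullet> s) / real n"
  have "vnorm2 (vec n (\<lambda>i. x $ i * s $ i - \<mu>)) \<le> \<theta> * \<mu>"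
    using nb A by (simp add: neighbourhood_def Let_def \<mu>_def)
  moreover have "\<bar>x $ i * s $ i - \<mu>\<bar> \<le> vnorm2 (vec n (\<lambda>i. x $ i * s $ i - \<mu>))"
    using abs_index_le_vnorm2[of i "vec n (\<lambda>i. x $ i * s $ i - \<mu>)"] i by simp
  ultimately show ?thesis unfolding \<mu>_def[symmetric] by (simp add: algebra_simps abs_le_iff)
qed

lemma newton_factor_bound:
  fixes \<omega> \<mu> \<theta> \<sigma> :: real
  assumes \<mu>: "0 < \<mu>" and \<theta>: "\<theta> < 1 / 3" and \<sigma>: "0 \<le> \<sigma>"
  shows "sqrt 2 * \<omega>^2 / ((1 - \<theta>) * \<mu>) \<le> 3 * ((\<omega>^2 + \<mu> * \<sigma>) / \<mu>)"
proof -
  define \<beta> where "\<beta> = (1 - \<theta>) * \<mu>"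
  have "\<mu> * \<theta> < \<mu> * (1 / 3)" using mult_strict_left_mono[OF \<theta> \<mu>] .
  moreover have "\<beta> = \<mu> - \<mu> * \<theta>" by (simp add: \<beta>_def algebra_simps)
  ultimately have \<beta>: "2 / 3 * \<mu> \<le> \<beta>" "0 < \<beta>" using \<mu> by linarith+
  have "sqrt 2 * \<omega>^2 / \<beta> = sqrt 2 * (\<omega>^2 / \<beta>)" by simp
  also have "\<dots> \<le> 3 / 2 * (\<omega>^2 / (2 / 3 * \<mu>))"
  proof (rule mult_mono)
    show "sqrt 2 \<le> 3 / 2" by (rule real_le_lsqrt) (auto simp: power2_eq_square)
    show "\<omega>^2 / \<beta> \<le> \<omega>^2 / (2 / 3 * \<mu>)" using \<beta> \<mu> by (intro divide_left_mono) auto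
  qed (use \<beta> in auto)
  also have "\<dots> \<le> 3 * ((\<omega>^2 + \<mu> * \<sigma>) / \<mu>)"
    using \<mu> \<sigma> by (simp add: field_simps)
  finally show ?thesis unfolding \<beta>_def .
qed

lemma newton_mat_cond_num_bound:
  fixes A Q :: "real mat" and b c x y s :: "real vec" and \<theta> :: real
  assumes A: "A \<in> carrier_mat m n" and mn: "m \<le> n" and det: "det (basis_part A) \<noteq> 0"
    and Q: "Q \<in> carrier_mat n n" and psd: "psd Q"
    and nb: "neighbourhood A b c Q \<theta> x y s" and \<theta>: "0 < \<theta>" "\<theta> < 1 / (3 * sqrt (real n))"
  defines "\<mu> \<equiv> (x \<bullet> s) / real n" and "\<omega> \<equiv> Max ({x $ i | i. i < n} \<union> {s $ i | i. i < n})"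
  shows "0 < sigma_min (newton_mat A Q x s)"
    "cond_num (newton_mat A Q x s) \<le> 3 * ((\<omega>^2 + \<mu> * sigma_max Q) / \<mu>) * cond_num (vaq_mat A Q)"
proof -
  have n: "0 < n" using \<theta> by (cases "n = 0") auto
  then have "1 / (3 * sqrt (real n)) \<le> 1 / 3" by (intro divide_left_mono) auto
  then have \<theta>3: "\<theta> < 1 / 3" using \<theta>(2) by linarith
  from nb A have x: "x \<in> carrier_vec n" and s: "s \<in> carrier_vec n"
    and pos: "\<And>i. i < n \<Longrightarrow> 0 < x $ i \<and> 0 < s $ i"
    by (auto simp: neighbourhood_def Let_def)
  have "0 < x \<bullet> s" unfolding scalar_prod_def using s n pos by (auto intro!: sum_pos)
  then have \<mu>: "0 < \<mu>" using n by (simp add: \<mu>_def)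
  have \<omega>_ge: "x $ i \<le> \<omega>" "s $ i \<le> \<omega>" if "i < n" for i
    unfolding \<omega>_def using that by (auto intro!: Max_ge finite_image_set)
  have bounds: "0 < x $ i \<and> 0 < s $ i \<and> x $ i \<le> \<omega> \<and> s $ i \<le> \<omega> \<and> (1 - \<theta>) * \<mu> \<le> x $ i * s $ i"
    if "i < n" for i
    using pos \<omega>_ge neighbourhood_product_lower_bound[OF nb A] that by (simp add: \<mu>_def)
  have "0 < (1 - \<theta>) * \<mu>" using \<theta>3 \<mu> by simp
  note newton = newton_mat_cond_num_le[OF A mn det Q psd x s n bounds this]
  show "0 < sigma_min (newton_mat A Q x s)" using newton(1) by simp
  have VAQ: "transpose_mat (vaq_mat A Q) \<in> carrier_mat (n + n) n"
    using vaq_mat_carrier[OF A mn det Q] by simp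
  have "gram_mat (vaq_mat A Q) = transpose_mat (transpose_mat (vaq_mat A Q)) * transpose_mat (vaq_mat A Q)"
    using vaq_mat_carrier[OF A mn det Q] n by (simp add: gram_mat_def)
  then have \<kappa>: "0 \<le> cond_num (vaq_mat A Q)" by (rule cond_num_nonneg[OF VAQ n])
  have "gram_mat Q = transpose_mat Q * Q" using Q by (simp add: gram_mat_def)
  then have \<sigma>: "0 \<le> sigma_max Q" by (rule sigma_max_gram(1)[OF Q n])
  note newton(2)
  also have "sqrt 2 * \<omega>^2 / ((1 - \<theta>) * \<mu>) * cond_num (vaq_mat A Q)
      \<le> 3 * ((\<omega>^2 + \<mu> * sigma_max Q) / \<mu>) * cond_num (vaq_mat A Q)"
    by (rule mult_right_mono[OF newton_factor_bound[OF \<mu> \<theta>3 \<sigma>] \<kappa>])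
  finally show "cond_num (newton_mat A Q x s) \<le> 3 * ((\<omega>^2 + \<mu> * sigma_max Q) / \<mu>) * cond_num (vaq_mat A Q)" .
qed

theorem lemma3:
  "\<exists>C :: real. \<forall>(m::nat) (n::nat) (A::real mat) (b::real vec) (c::real vec) (Q::real mat)
      (x::real vec) (y::real vec) (s::real vec) (\<theta>::real).
     A \<in> carrier_mat m n \<longrightarrow> b \<in> carrier_vec m \<longrightarrow> c \<in> carrier_vec n \<longrightarrow>
     Q \<in> carrier_mat n n \<longrightarrow> psd Q \<longrightarrow>
     m \<le> n \<longrightarrow> vec_space.rank m A = m \<longrightarrow>
     det (basis_part A) \<noteq> 0 \<longrightarrow>
     neighbourhood A b c Q \<theta> x y s \<longrightarrow>
     0 < \<theta> \<longrightarrow> \<theta> < 1 / (3 * sqrt (real n)) \<longrightarrow>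
     \<theta> < 1 / (4 * frob_norm (Q * null_basis A * transpose_mat (null_basis A)) + 1) \<longrightarrow>
     (let V = null_basis A;
          X = diag_vec x; S = diag_vec s;
          \<mu> = (x \<bullet> s) / real n;
          \<omega> = Max ({x $ i | i. i < n} \<union> {s $ i | i. i < n});
          M = four_block_mat (S * V + X * Q * V) (- (X * transpose_mat A)) (0\<^sub>m 0 (n - m)) (0\<^sub>m 0 m);
          VAQ = four_block_mat (transpose_mat V) (0\<^sub>m (n - m) n) (0\<^sub>m m n) A *
                four_block_mat (1\<^sub>m n) (- Q) (0\<^sub>m n n) (1\<^sub>m n)
      in 0 < sigma_min M \<and>
         cond_num M \<le> C * ((\<omega>^2 + \<mu> * sigma_max Q) / \<mu>) * cond_num VAQ)"
proof (intro exI[of _ 3] allI impI, goal_cases)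
  case (1 m n A b c Q x y s \<theta>)
  note bound = newton_mat_cond_num_bound[OF "1"(1,6,8,4,5,9,10,11)]
  from "1"(1) have "dim_row A = m" "dim_col A = n" by auto
  with bound show ?case unfolding newton_mat_def vaq_mat_def Let_def by simp
qed

end
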